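(* The matrix $U=\frac{1}{\sqrt2}\left(S_0\otimes I_2\otimes I_2+S_1\otimes\sigma_3\otimes\sigma_3+S_2\otimes\sigma_1\otimes\sigma_1+S_3\otimes\sigma_2\otimes\sigma_2\right)$ on $\mathbb{C}^2\otimes\mathbb{C}^2\otimes\mathbb{C}^2$ has $\mathrm{sr}(U)=4$.
   Context: $S_0=\begin{bmatrix}1&0\\0&0\end{bmatrix}$, $S_1=\begin{bmatrix}0&1\\0&0\end{bmatrix}$, $S_2=\begin{bmatrix}0&0\\1&0\end{bmatrix}$, $S_3=\begin{bmatrix}0&0\\0&1\end{bmatrix}$. $I_2$ is the $2\times2$ identity and $\sigma_1=\begin{bmatrix}0&1\\1&0\end{bmatrix}$, $\sigma_2=\begin{bmatrix}0&-i\\i&0\end{bmatrix}$, $\sigma_3=\begin{bmatrix}1&0\\0&-1\end{bmatrix}$ are the Pauli matrices. For a matrix $U$ on $\mathbb{C}^2\otimes\mathbb{C}^2\otimes\mathbb{C}^2$ (systems $A,B,C$), its Schmidt rank $\mathrm{sr}(U)$ is the least integer $r$ such that $U=\sum_{j=1}^r A_j\otimes B_j\otimes C_j$ with $A_j,B_j,C_j$ complex $2\times 2$ matrices (i.e. the tensor rank of $U$). *)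

theory Defs
  imports "HOL-Analysis.Analysis"
begin

text \<open>Complex 2x2 matrices; rows/columns indexed by the two-element type 2
  (entry in row r, column c is A $ r $ c; built with vector literals, indices 1 and 2).\<close>
type_synonym cmat2 = "complex ^ 2 ^ 2"

text \<open>Matrices on C^2 (x) C^2 (x) C^2, with rows and columns indexed by
  triples (a,b,c) of basis indices of systems A, B, C.\<close>
type_synonym cmat8 = "(2 \<times> 2 \<times> 2) \<Rightarrow> (2 \<times> 2 \<times> 2) \<Rightarrow> complex"

definition mat2 :: "complex \<Rightarrow> complex \<Rightarrow> complex \<Rightarrow> complex \<Rightarrow> cmat2" where
  "mat2 a b c d = vector [vector [a, b], vector [c, d]]"

definition S0 :: cmat2 where "S0 = mat2 1 0 0 0"
definition S1 :: cmat2 where "S1 = mat2 0 1 0 0"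
definition S2 :: cmat2 where "S2 = mat2 0 0 1 0"
definition S3 :: cmat2 where "S3 = mat2 0 0 0 1"
definition I2 :: cmat2 where "I2 = mat2 1 0 0 1"
definition sigma1 :: cmat2 where "sigma1 = mat2 0 1 1 0"
definition sigma2 :: cmat2 where "sigma2 = mat2 0 (- \<i>) \<i> 0"
definition sigma3 :: cmat2 where "sigma3 = mat2 1 0 0 (-1)"

definition tensor3 :: "cmat2 \<Rightarrow> cmat2 \<Rightarrow> cmat2 \<Rightarrow> cmat8" where
  "tensor3 A B C = (\<lambda>(i1, i2, i3) (j1, j2, j3). A $ i1 $ j1 * B $ i2 $ j2 * C $ i3 $ j3)"

definition schmidt_rank :: "cmat8 \<Rightarrow> nat" where
  "schmidt_rank U = (LEAST r. \<exists>A B C :: nat \<Rightarrow> cmat2.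
      \<forall>x y. U x y = (\<Sum>j<r. tensor3 (A j) (B j) (C j) x y))"

definition Umat :: cmat8 where
  "Umat = (\<lambda>x y. complex_of_real (1 / sqrt 2) *
     (tensor3 S0 I2 I2 x y + tensor3 S1 sigma3 sigma3 x y
      + tensor3 S2 sigma1 sigma1 x y + tensor3 S3 sigma2 sigma2 x y))"

end

theory Submission
  imports Defs
begin

text \<open>The upper bound is the defining expression of U itself. For the lower bound, flatten U
  across the cut A | BC: a sum of r product operators gives a matrix of rank at most r. The
  4 x 4 block of this flattening formed by the four entries of system A and four suitable
  entries of the BC factor is a real orthogonal matrix, hence invertible, so r \<ge> 4.\<close>

definition tensor_decomposable :: "nat \<Rightarrow> cmat8 \<Rightarrow> bool" where
  "tensor_decomposable r U \<longleftrightarrow> (\<exists>A B C :: nat \<Rightarrow> cmat2.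
      \<forall>x y. U x y = (\<Sum>j<r. tensor3 (A j) (B j) (C j) x y))"

lemma schmidt_rank_eq_Least: "schmidt_rank U = (LEAST r. tensor_decomposable r U)"
  by (simp add: schmidt_rank_def tensor_decomposable_def)

lemma tensor3_zero_left [simp]: "tensor3 0 B C x y = 0"
  by (simp add: tensor3_def split: prod.splits)

lemma tensor_decomposable_mono:
  assumes "tensor_decomposable r U" and "r \<le> s"
  shows "tensor_decomposable s U"
proof -
  obtain A B C where dec: "\<And>x y. U x y = (\<Sum>j<r. tensor3 (A j) (B j) (C j) x y)"
    using assms(1) unfolding tensor_decomposable_def by blast
  define A' where "A' j = (if j < r then A j else 0)" for j
  have "U x y = (\<Sum>j<s. tensor3 (A' j) (B j) (C j) x y)" for x y
  proof -
    have "(\<Sum>j<s. tensor3 (A' j) (B j) (C j) x y) = (\<Sum>j<r. tensor3 (A' j) (B j) (C j) x y)"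
      using assms(2) by (intro sum.mono_neutral_right) (auto simp: A'_def)
    then show ?thesis
      by (simp add: dec A'_def)
  qed
  then show ?thesis
    unfolding tensor_decomposable_def by blast
qed

definition A_flattening :: "cmat8 \<Rightarrow> 2 \<times> 2 \<Rightarrow> (2 \<times> 2) \<times> (2 \<times> 2) \<Rightarrow> complex" where
  "A_flattening U = (\<lambda>(i, j) ((i', j'), (i'', j'')). U (i, i', i'') (j, j', j''))"

lemma A_flattening_factors:
  assumes "tensor_decomposable r U"
  shows "\<exists>a w. \<forall>p q. A_flattening U p q = (\<Sum>l<r. a p l * w l q)"
proof -
  obtain A B C where dec: "\<And>x y. U x y = (\<Sum>j<r. tensor3 (A j) (B j) (C j) x y)"
    using assms unfolding tensor_decomposable_def by blast
  define a where "a = (\<lambda>(i, j) l. A l $ i $ j)"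
  define w where "w = (\<lambda>l ((i', j'), (i'', j'')). B l $ i' $ j' * C l $ i'' $ j'')"
  have "A_flattening U p q = (\<Sum>l<r. a p l * w l q)" for p q
    by (simp add: A_flattening_def dec tensor3_def a_def w_def mult.assoc split: prod.splits)
  then show ?thesis
    by blast
qed

lemma det_inner_dim_3:
  fixes a :: "4 \<Rightarrow> nat \<Rightarrow> 'a::field" and w :: "nat \<Rightarrow> 4 \<Rightarrow> 'a"
  shows "det (\<chi> k m. \<Sum>l<3. a k l * w l m) = 0"
proof -
  define idx :: "4 \<Rightarrow> nat" where "idx j = (if j = 1 then 0 else if j = 2 then 1 else 2)" for j
  define P :: "'a^4^4" where "P = (\<chi> k j. if j = 4 then 0 else a k (idx j))"
  define R :: "'a^4^4" where "R = (\<chi> j m. if j = 4 then 0 else w (idx j) m)"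
  have "(\<chi> k m. \<Sum>l<3. a k l * w l m) = P ** R"
    by (simp add: vec_eq_iff matrix_matrix_mult_def P_def R_def sum_4 idx_def
        numeral_3_eq_3 numeral_2_eq_2 lessThan_Suc add.commute add.left_commute)
  moreover have "det P = 0"
    by (rule det_zero_column(2)[of 4]) (simp add: column_def P_def vec_eq_iff)
  ultimately show ?thesis
    by (simp add: det_mul)
qed

definition Umat_block :: "complex^4^4" where
  "Umat_block = (\<chi> k m. A_flattening Umat
     (if k = 1 then (1, 1) else if k = 2 then (1, 2) else if k = 3 then (2, 1) else (2, 2))
     (if m = 1 then ((1, 1), (1, 1)) else if m = 2 then ((1, 1), (2, 2))
      else if m = 3 then ((1, 2), (1, 2)) else ((1, 2), (2, 1))))"

text \<open>Explicitly, the block is 1/sqrt 2 times the matrix with rows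
  (1, 1, 0, 0), (1, -1, 0, 0), (0, 0, 1, -1), (0, 0, 1, 1).\<close>
lemma Umat_block_orthogonal: "Umat_block ** transpose Umat_block = mat 1"
proof -
  have sqrt2_sq: "complex_of_real (sqrt 2) * complex_of_real (sqrt 2) = 2"
    by (simp flip: of_real_mult)
  have "(Umat_block ** transpose Umat_block) $ k $ l = mat 1 $ k $ l" for k l
    using exhaust_4[of k] exhaust_4[of l]
    by (elim disjE) (simp_all add: matrix_matrix_mult_def transpose_def mat_def sum_4
        Umat_block_def A_flattening_def Umat_def tensor3_def S0_def S1_def S2_def S3_def
        I2_def sigma1_def sigma2_def sigma3_def mat2_def algebra_simps sqrt2_sq)
  then show ?thesis
    by (simp add: vec_eq_iff)
qed

lemma det_Umat_block_nonzero: "det Umat_block \<noteq> 0"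
  using arg_cong[OF Umat_block_orthogonal, of det] by (auto simp: det_mul)

lemma Umat_tensor_decomposable_4: "tensor_decomposable 4 Umat"
proof -
  define A :: "nat \<Rightarrow> cmat2" where
    "A j = (1 / sqrt 2) *\<^sub>R ([S0, S1, S2, S3] ! j)" for j
  define B :: "nat \<Rightarrow> cmat2" where "B j = [I2, sigma3, sigma1, sigma2] ! j" for j
  have "Umat x y = (\<Sum>j<4. tensor3 (A j) (B j) (B j) x y)" for x y
    by (simp add: Umat_def tensor3_def A_def B_def eval_nat_numeral lessThan_Suc
        vector_scaleR_component split: prod.splits)
       (simp add: scaleR_conv_of_real algebra_simps add_divide_distrib)
  then show ?thesis
    unfolding tensor_decomposable_def by blast
qed

lemma Umat_not_tensor_decomposable_3: "\<not> tensor_decomposable 3 Umat"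
proof
  assume "tensor_decomposable 3 Umat"
  then obtain a w where fl: "\<And>p q. A_flattening Umat p q = (\<Sum>l<(3::nat). a p l * w l q)"
    using A_flattening_factors by blast
  have "det Umat_block = 0"
    unfolding Umat_block_def fl by (rule det_inner_dim_3)
  with det_Umat_block_nonzero show False
    by contradiction
qed

theorem mainTheorem7:
  shows "schmidt_rank Umat = 4"
  unfolding schmidt_rank_eq_Least
proof (rule Least_equality)
  show "tensor_decomposable 4 Umat"
    by (rule Umat_tensor_decomposable_4)
next
  fix r
  assume "tensor_decomposable r Umat"
  then show "4 \<le> r"
    using tensor_decomposable_mono[of r Umat 3] Umat_not_tensor_decomposable_3 by linarith
qed

end
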